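(* Let $A,B\in\mathbb{R}[x]$. If $(A,B)$ is an interpolatory 1-cube, then $(A,B,B,xA)$ is an interpolatory square.
   Context: A polynomial is standard if it is $\equiv0$ or has positive leading coefficient. It has only nonpositive zeros if it is $\equiv0$ or all its zeros are real and $\le0$. Relation $\prec$: for $A,B$ with only real zeros, with zeros $\xi_1\le\cdots\le\xi_a$ of $A$ and $\theta_1\le\cdots\le\theta_b$ of $B$, $A\prec B$ means one of the following: - $\deg B=\deg A+1$ and $\theta_1\le\xi_1\le\theta_2\le\cdots\le\xi_a\le\theta_{a+1}$; - $\deg A=\deg B$ and $\xi_1\le\theta_1\le\cdots\le\xi_a\le\theta_a$. By convention $A\prec0$ and $0\prec A$. An interpolatory 1-cube is a pair $(A,B)$ of standard polynomials with only nonpositive zeros and $A\prec B$. A quadruple $(A,B,P,Q)$ is an interpolatory square if, for all $\lambda,\rho>0$, both $(\lambda A+\rho B,\lambda P+\rho Q)$ and $(\lambda B+\rho xA,\lambda Q+\rho xP)$ are interpolatory 1-cubes. *)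

theory Defs
  imports "HOL-Computational_Algebra.Polynomial" Complex_Main
begin

definition standard :: "real poly \<Rightarrow> bool" where
  "standard p \<longleftrightarrow> p = 0 \<or> lead_coeff p > 0"

definition only_real_zeros :: "real poly \<Rightarrow> bool" where
  "only_real_zeros p \<longleftrightarrow>
     (\<forall>z::complex. poly (map_poly complex_of_real p) z = 0 \<longrightarrow> z \<in> \<real>)"

definition only_nonpos_zeros :: "real poly \<Rightarrow> bool" where
  "only_nonpos_zeros p \<longleftrightarrow> p = 0 \<or>
     (\<forall>z::complex. poly (map_poly complex_of_real p) z = 0 \<longrightarrow> z \<in> \<real> \<and> Re z \<le> 0)"

definition zero_list :: "real poly \<Rightarrow> real list \<Rightarrow> bool" where
  "zero_list p xs \<longleftrightarrow> p \<noteq> 0 \<and> sorted xs \<and>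
     p = smult (lead_coeff p) (\<Prod>x\<leftarrow>xs. [:-x, 1:])"

definition interlaces :: "real poly \<Rightarrow> real poly \<Rightarrow> bool" where
  "interlaces A B \<longleftrightarrow> A = 0 \<or> B = 0 \<or>
     (only_real_zeros A \<and> only_real_zeros B \<and>
      (\<exists>xs ys. zero_list A xs \<and> zero_list B ys \<and>
        ((degree B = degree A + 1 \<and>
            (\<forall>i<length xs. ys ! i \<le> xs ! i \<and> xs ! i \<le> ys ! (i + 1))) \<or>
         (degree A = degree B \<and>
            (\<forall>i<length xs. xs ! i \<le> ys ! i \<and>
                (i + 1 < length xs \<longrightarrow> ys ! i \<le> xs ! (i + 1)))))))"

definition interp_1cube :: "real poly \<Rightarrow> real poly \<Rightarrow> bool" where
  "interp_1cube A B \<longleftrightarrow> standard A \<and> standard B \<and>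
     only_nonpos_zeros A \<and> only_nonpos_zeros B \<and> interlaces A B"

definition interp_square :: "real poly \<Rightarrow> real poly \<Rightarrow> real poly \<Rightarrow> real poly \<Rightarrow> bool" where
  "interp_square A B P Q \<longleftrightarrow>
     (\<forall>l r::real. l > 0 \<longrightarrow> r > 0 \<longrightarrow>
        interp_1cube (smult l A + smult r B) (smult l P + smult r Q) \<and>
        interp_1cube (smult l B + smult r ([:0, 1:] * A))
                     (smult l Q + smult r ([:0, 1:] * P)))"

end

theory Submission
  imports Defs "HOL-Computational_Algebra.Fundamental_Theorem_Algebra"
begin

text \<open>
  A standard polynomial with only real zeros is a positive multiple of \<open>\<Prod>x\<in>#M. [:-x, 1:]\<close>
  for its multiset \<open>M\<close> of zeros, and \<open>A \<prec> B\<close> says that the counting functions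
  \<open>N\<^sub>M t = #{z \<in># M. t \<le> z}\<close> of the zero multisets satisfy \<open>N\<^sub>X \<le> N\<^sub>Y \<le> N\<^sub>X + 1\<close>.
  Once common zeros are cancelled, the zeros of \<open>A\<close> and \<open>B\<close> strictly alternate, so a positive
  combination \<open>a A + b B\<close> has opposite signs at consecutive zeros and, by the intermediate
  value theorem, a zero between them; the one further zero that the degree may require lies
  below all zeros of \<open>B\<close> by a sign check. Hence the zero multiset \<open>Z\<close> of \<open>a A + b B\<close>
  satisfies \<open>N\<^sub>X \<le> N\<^sub>Z \<le> N\<^sub>Y\<close>. As all zeros are nonpositive, also \<open>B \<prec> x A\<close>, so the zero
  multiset \<open>W\<close> of \<open>\<lambda> B + \<rho> x A\<close> satisfies \<open>N\<^sub>Y \<le> N\<^sub>W \<le> N\<^sub>X + 1\<close>, and together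
  \<open>N\<^sub>Z \<le> N\<^sub>W \<le> N\<^sub>Z + 1\<close>. The second pair of the square is the first one for the
  1-cube \<open>(B, x A)\<close>.
\<close>

section \<open>Polynomials with prescribed zeros\<close>

definition root_poly :: "real multiset \<Rightarrow> real poly" where
  "root_poly M = (\<Prod>x\<in>#M. [:-x, 1:])"

lemma root_poly_empty [simp]: "root_poly {#} = 1"
  by (simp add: root_poly_def)

lemma root_poly_add_mset: "root_poly (add_mset x M) = [:-x, 1:] * root_poly M"
  by (simp add: root_poly_def)

lemma root_poly_union [simp]: "root_poly (M + N) = root_poly M * root_poly N"
  by (simp add: root_poly_def)

lemma lead_coeff_root_poly [simp]: "lead_coeff (root_poly M) = 1"
  by (induction M) (simp_all add: root_poly_add_mset lead_coeff_mult del: mult_pCons_left)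

lemma root_poly_nonzero [simp]: "root_poly M \<noteq> 0"
  by (metis lead_coeff_root_poly leading_coeff_0_iff zero_neq_one)

lemma degree_root_poly: "degree (root_poly M) = size M"
  by (induction M) (simp_all add: root_poly_add_mset degree_mult_eq del: mult_pCons_left)

lemma poly_root_poly_eq_0_iff [simp]: "poly (root_poly M) t = 0 \<longleftrightarrow> t \<in># M"
  by (induction M) (auto simp: root_poly_add_mset)

lemma prod_list_linear_factors: "(\<Prod>x\<leftarrow>xs. [:-x, 1:]) = root_poly (mset xs)"
  by (induction xs) (auto simp: root_poly_add_mset)

lemma sign_poly_root_poly:
  assumes "t \<notin># M"
  shows "(-1) ^ size {#z \<in># M. t < z#} * poly (root_poly M) t > 0"
  using assms
proof (induction M)
  case (add x M)
  then have IH: "(-1) ^ size {#z \<in># M. t < z#} * poly (root_poly M) t > 0" and "x \<noteq> t"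
    by auto
  have "(-1) ^ size {#z \<in># add_mset x M. t < z#} * poly (root_poly (add_mset x M)) t
      = ((-1) ^ size {#z \<in># M. t < z#} * poly (root_poly M) t) * \<bar>x - t\<bar>"
    by (cases "t < x") (simp_all add: root_poly_add_mset algebra_simps del: mult_pCons_left)
  then show ?case
    using IH \<open>x \<noteq> t\<close> by simp
qed simp

lemma root_poly_dvd:
  "distinct zs \<Longrightarrow> (\<And>z. z \<in> set zs \<Longrightarrow> poly p z = 0) \<Longrightarrow> root_poly (mset zs) dvd p"
proof (induction zs arbitrary: p)
  case (Cons z zs)
  then obtain q where q: "p = [:-z, 1:] * q"
    by (metis list.set_intros(1) dvdE poly_eq_0_iff_dvd)
  have "root_poly (mset zs) dvd q"
    using Cons by (auto simp: q)
  then show ?case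
    by (simp add: q root_poly_add_mset mult_dvd_mono del: mult_pCons_left)
qed simp

lemma degree_add_of_lead_coeff_pos:
  fixes p q :: "'a::linordered_idom poly"
  assumes "lead_coeff p > 0" "lead_coeff q > 0" "degree p \<le> degree q"
  shows "degree (p + q) = degree q" "lead_coeff (p + q) > 0"
proof -
  have "coeff (p + q) (degree q) > 0"
    using assms by (cases "degree p = degree q") (simp_all add: coeff_eq_0)
  moreover have "degree (p + q) \<le> degree q"
    using assms(3) by (simp add: degree_add_le)
  ultimately show "degree (p + q) = degree q"
    by (simp add: le_antisym le_degree)
  then show "lead_coeff (p + q) > 0"
    using \<open>coeff (p + q) (degree q) > 0\<close> by simp
qed

lemma map_poly_of_real_mult:
  "map_poly complex_of_real (p * q) = map_poly complex_of_real p * map_poly complex_of_real q"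
  by (rule poly_eqI) (simp add: coeff_map_poly coeff_mult)

lemma map_poly_of_real_inject:
  "map_poly complex_of_real p = map_poly complex_of_real q \<longleftrightarrow> p = q"
  by (metis coeff_map_poly of_real_0 of_real_eq_iff poly_eqI)

lemma map_poly_of_real_root_poly:
  "map_poly complex_of_real (root_poly M) = (\<Prod>x\<in>#M. [:-complex_of_real x, 1:])"
  by (induction M) (simp_all add: root_poly_add_mset map_poly_of_real_mult map_poly_pCons
      del: mult_pCons_left)

lemma complex_zeros_smult_root_poly:
  assumes "c \<noteq> 0"
  shows "poly (map_poly complex_of_real (smult c (root_poly M))) z = 0 \<longleftrightarrow>
    (\<exists>x\<in>#M. z = complex_of_real x)"
  using assms by (auto simp: map_poly_smult map_poly_of_real_root_poly poly_prod_mset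
      prod_mset_zero_iff)

lemma real_rooted_factorization:
  assumes "only_real_zeros p"
  obtains M where "p = smult (lead_coeff p) (root_poly M)"
proof
  let ?q = "map_poly complex_of_real p"
  have real: "z \<in> \<real>" if "z \<in># proots ?q" for z
    using that assms unfolding only_real_zeros_def
    by (cases "?q = 0") auto
  have "map_poly complex_of_real (root_poly (image_mset Re (proots ?q)))
      = (\<Prod>z\<in>#proots ?q. [:-z, 1:])"
    unfolding map_poly_of_real_root_poly multiset.map_comp
    by (intro arg_cong[where f = prod_mset] image_mset_cong) (simp add: real)
  moreover have "lead_coeff ?q = complex_of_real (lead_coeff p)"
    by (simp add: coeff_map_poly degree_map_poly)
  ultimately have "map_poly complex_of_real (smult (lead_coeff p) (root_poly (image_mset Re (proots ?q))))
      = ?q"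
    using complex_poly_decompose_multiset[of ?q] by (simp add: map_poly_smult)
  then show "p = smult (lead_coeff p) (root_poly (image_mset Re (proots ?q)))"
    by (simp add: map_poly_of_real_inject)
qed

lemma only_real_zeros_smult_root_poly: "c \<noteq> 0 \<Longrightarrow> only_real_zeros (smult c (root_poly M))"
  by (auto simp: only_real_zeros_def complex_zeros_smult_root_poly)

lemma only_nonpos_zeros_smult_root_poly:
  "c \<noteq> 0 \<Longrightarrow> only_nonpos_zeros (smult c (root_poly M)) \<longleftrightarrow> (\<forall>z\<in>#M. z \<le> 0)"
  by (fastforce simp: only_nonpos_zeros_def complex_zeros_smult_root_poly)

definition standard_with_zeros :: "real poly \<Rightarrow> real multiset \<Rightarrow> bool" where
  "standard_with_zeros p M \<longleftrightarrow> (\<exists>c>0. p = smult c (root_poly M))"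

lemma standard_with_zeros_smult:
  "standard_with_zeros p M \<Longrightarrow> l > 0 \<Longrightarrow> standard_with_zeros (smult l p) M"
  unfolding standard_with_zeros_def by (metis mult_pos_pos smult_smult)

lemma standard_with_zeros_times_x:
  "standard_with_zeros p M \<Longrightarrow> standard_with_zeros ([:0, 1:] * p) (add_mset 0 M)"
  unfolding standard_with_zeros_def by (auto simp: root_poly_add_mset)

lemma standard_with_zerosD:
  assumes "standard_with_zeros p M"
  shows "p \<noteq> 0" "standard p" "only_real_zeros p" "degree p = size M"
    "smult (lead_coeff p) (root_poly M) = p"
    "only_nonpos_zeros p \<longleftrightarrow> (\<forall>z\<in>#M. z \<le> 0)"
proof -
  obtain c where c: "c > 0" "p = smult c (root_poly M)"
    using assms standard_with_zeros_def by auto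
  then have "lead_coeff p = c"
    by simp
  then show "p \<noteq> 0" "standard p" "only_real_zeros p" "degree p = size M"
    "smult (lead_coeff p) (root_poly M) = p" "only_nonpos_zeros p \<longleftrightarrow> (\<forall>z\<in>#M. z \<le> 0)"
    using c by (simp_all add: degree_root_poly standard_def only_real_zeros_smult_root_poly
        only_nonpos_zeros_smult_root_poly)
qed

lemma standard_with_zerosE:
  assumes "p \<noteq> 0" "standard p" "only_nonpos_zeros p"
  obtains M where "standard_with_zeros p M" "\<forall>z\<in>#M. z \<le> 0"
proof -
  have "only_real_zeros p"
    using assms(1,3) by (auto simp: only_nonpos_zeros_def only_real_zeros_def)
  then obtain M where M: "p = smult (lead_coeff p) (root_poly M)"
    by (rule real_rooted_factorization)
  moreover have "lead_coeff p > 0"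
    using assms(1,2) by (simp add: standard_def)
  ultimately show ?thesis
    using that assms(1,3) only_nonpos_zeros_smult_root_poly[of "lead_coeff p" M]
    by (auto simp: standard_with_zeros_def)
qed

lemma standard_with_zeros_degree_le_1:
  assumes "degree q \<le> 1" "lead_coeff q > 0"
  obtains E where "standard_with_zeros q E"
proof (cases "degree q = 0")
  case True
  then have "q = smult (lead_coeff q) (root_poly {#})"
    by (elim degree_eq_zeroE) simp
  then show ?thesis
    using that assms(2) unfolding standard_with_zeros_def by blast
next
  case False
  then have deg: "degree q = 1"
    using assms(1) by simp
  define e where "e = - coeff q 0 / lead_coeff q"
  have "q = smult (lead_coeff q) (root_poly {#e#})"
    using deg assms(2)
    by (intro poly_eqI) (auto simp: e_def root_poly_add_mset coeff_pCons coeff_eq_0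
        split: nat.split)
  then show ?thesis
    using that assms(2) unfolding standard_with_zeros_def by blast
qed

section \<open>Counting zeros\<close>

definition count_ge :: "real multiset \<Rightarrow> real \<Rightarrow> nat" where
  "count_ge M t = size {#z \<in># M. t \<le> z#}"

lemma count_ge_union [simp]: "count_ge (M + N) t = count_ge M t + count_ge N t"
  by (simp add: count_ge_def)

lemma count_ge_add_mset: "count_ge (add_mset x M) t = count_ge M t + (if t \<le> x then 1 else 0)"
  by (simp add: count_ge_def)

lemma count_ge_eq_0_iff: "count_ge M t = 0 \<longleftrightarrow> (\<forall>z\<in>#M. z < t)"
  by (auto simp: count_ge_def not_le)

lemma count_ge_eq_size: "(\<And>z. z \<in># M \<Longrightarrow> t \<le> z) \<Longrightarrow> count_ge M t = size M"
  by (induction M) (auto simp: count_ge_add_mset count_ge_def)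

lemma count_ge_mset: "count_ge (mset xs) t = card {k. k < length xs \<and> t \<le> xs ! k}"
  by (simp add: count_ge_def length_filter_conv_card flip: mset_filter)

lemma size_filter_mset_mset: "size {#z \<in># mset zs. P z#} = card {j. j < length zs \<and> P (zs ! j)}"
  by (simp add: length_filter_conv_card flip: mset_filter)

lemma card_le_count_ge_mset:
  "I \<subseteq> {..<length xs} \<Longrightarrow> (\<And>i. i \<in> I \<Longrightarrow> t \<le> xs ! i) \<Longrightarrow> card I \<le> count_ge (mset xs) t"
  unfolding count_ge_mset by (intro card_mono) auto

lemma count_ge_mset_le_card:
  "finite I \<Longrightarrow> (\<And>i. i < length xs \<Longrightarrow> t \<le> xs ! i \<Longrightarrow> i \<in> I) \<Longrightarrow>
    count_ge (mset xs) t \<le> card I"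
  unfolding count_ge_mset by (intro card_mono) auto

lemma count_ge_mset_mono_nth:
  assumes "length xs \<le> length ys" "\<And>k. k < length xs \<Longrightarrow> xs ! k \<le> ys ! k"
  shows "count_ge (mset xs) t \<le> count_ge (mset ys) t"
  unfolding count_ge_mset using assms by (intro card_mono) (auto intro: order_trans)

lemma nonpos_if_count_ge_le:
  assumes "\<And>t. t > 0 \<Longrightarrow> count_ge M t \<le> count_ge N t" "\<forall>z\<in>#N. z \<le> 0"
  shows "\<forall>z\<in>#M. z \<le> 0"
proof (rule ccontr)
  assume "\<not> (\<forall>z\<in>#M. z \<le> 0)"
  then obtain z where "z \<in># M" "z > 0"
    by auto
  then have "count_ge N z = 0" "count_ge M z \<noteq> 0"
    using assms(2) by (auto simp: count_ge_eq_0_iff)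
  then show False
    using assms(1)[OF \<open>z > 0\<close>] by simp
qed

lemma le_sorted_nth_iff_count_ge:
  assumes "sorted zs" "i < length zs"
  shows "t \<le> zs ! i \<longleftrightarrow> length zs - i \<le> count_ge (mset zs) t"
proof
  assume "t \<le> zs ! i"
  then have "card {i..<length zs} \<le> count_ge (mset zs) t"
    using assms by (intro card_le_count_ge_mset) (auto intro: order_trans sorted_nth_mono)
  then show "length zs - i \<le> count_ge (mset zs) t"
    by simp
next
  assume le: "length zs - i \<le> count_ge (mset zs) t"
  show "t \<le> zs ! i"
  proof (rule ccontr)
    assume "\<not> t \<le> zs ! i"
    then have "count_ge (mset zs) t \<le> card {Suc i..<length zs}"
      using assms by (intro count_ge_mset_le_card) (auto simp: not_less_eq_eq
          dest: sorted_nth_mono[of zs _ i])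
    then show False
      using le assms(2) by simp
  qed
qed

lemma le_sorted_rev_nth_iff_count_ge:
  assumes "sorted (rev zs)" "k < length zs"
  shows "t \<le> zs ! k \<longleftrightarrow> k + 1 \<le> count_ge (mset zs) t"
  using le_sorted_nth_iff_count_ge[of "rev zs" "length zs - 1 - k" t] assms
  by (simp add: rev_nth)

definition interlacing :: "real multiset \<Rightarrow> real multiset \<Rightarrow> bool" where
  "interlacing X Y \<longleftrightarrow> (\<forall>t. count_ge X t \<le> count_ge Y t \<and> count_ge Y t \<le> count_ge X t + 1)"

lemma interlacing_size:
  assumes "interlacing X Y"
  shows "size X \<le> size Y" "size Y \<le> size X + 1"
proof -
  obtain t where "\<forall>z \<in> set_mset (X + Y). t \<le> z"
    using bdd_below_finite[of "set_mset (X + Y)"] by (auto simp: bdd_below_def)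
  then have "count_ge X t = size X" "count_ge Y t = size Y"
    by (auto intro: count_ge_eq_size)
  then show "size X \<le> size Y" "size Y \<le> size X + 1"
    using assms unfolding interlacing_def by metis+
qed

lemma interlacing_refl: "interlacing X X"
  by (simp add: interlacing_def)

lemma interlacing_add_common: "interlacing (G + X) (G + Y) \<longleftrightarrow> interlacing X Y"
  by (simp add: interlacing_def)

lemma interlacing_add_mset_0:
  assumes "interlacing X Y" "\<forall>z\<in>#Y. z \<le> 0"
  shows "interlacing Y (add_mset 0 X)"
  unfolding interlacing_def
proof
  fix t
  show "count_ge Y t \<le> count_ge (add_mset 0 X) t \<and> count_ge (add_mset 0 X) t \<le> count_ge Y t + 1"
  proof (cases "t \<le> 0")
    case True
    then show ?thesis
      using assms(1) by (simp add: interlacing_def count_ge_add_mset)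
  next
    case False
    then have "count_ge Y t = 0"
      using assms(2) by (force simp: count_ge_eq_0_iff)
    then have "count_ge X t = 0"
      using assms(1) unfolding interlacing_def by (metis le_zero_eq)
    then show ?thesis
      using False \<open>count_ge Y t = 0\<close> by (simp add: count_ge_add_mset)
  qed
qed

definition interlacing_lists :: "real list \<Rightarrow> real list \<Rightarrow> bool" where
  "interlacing_lists xs ys \<longleftrightarrow>
     (length ys = length xs + 1 \<and> (\<forall>i<length xs. ys ! i \<le> xs ! i \<and> xs ! i \<le> ys ! (i + 1))) \<or>
     (length xs = length ys \<and>
        (\<forall>i<length xs. xs ! i \<le> ys ! i \<and> (i + 1 < length xs \<longrightarrow> ys ! i \<le> xs ! (i + 1))))"

lemma interlacing_lists_if_interlacing:
  assumes xs: "sorted xs" and ys: "sorted ys" and il: "interlacing (mset xs) (mset ys)"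
  shows "interlacing_lists xs ys"
proof -
  let ?n = "length xs" and ?m = "length ys"
  have lower: "count_ge (mset xs) t \<le> count_ge (mset ys) t"
    and upper: "count_ge (mset ys) t \<le> count_ge (mset xs) t + 1" for t
    using il unfolding interlacing_def by auto
  have "?n \<le> ?m" "?m \<le> ?n + 1"
    using interlacing_size[OF il] by simp_all
  then consider "?m = ?n + 1" | "?m = ?n"
    by linarith
  then show ?thesis
  proof cases
    case 1
    have "ys ! i \<le> xs ! i \<and> xs ! i \<le> ys ! (i + 1)" if i: "i < ?n" for i
    proof
      show "ys ! i \<le> xs ! i"
        using upper[of "ys ! i"] le_sorted_nth_iff_count_ge[OF ys, of i "ys ! i"]
          le_sorted_nth_iff_count_ge[OF xs i, of "ys ! i"] i 1 by simp
      show "xs ! i \<le> ys ! (i + 1)"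
        using lower[of "xs ! i"] le_sorted_nth_iff_count_ge[OF xs i, of "xs ! i"]
          le_sorted_nth_iff_count_ge[OF ys, of "i + 1" "xs ! i"] i 1 by simp
    qed
    then show ?thesis
      using 1 by (simp add: interlacing_lists_def)
  next
    case 2
    have "xs ! i \<le> ys ! i \<and> (i + 1 < ?n \<longrightarrow> ys ! i \<le> xs ! (i + 1))" if i: "i < ?n" for i
    proof (intro conjI impI)
      show "xs ! i \<le> ys ! i"
        using lower[of "xs ! i"] le_sorted_nth_iff_count_ge[OF xs i, of "xs ! i"]
          le_sorted_nth_iff_count_ge[OF ys, of i "xs ! i"] i 2 by simp
      show "ys ! i \<le> xs ! (i + 1)" if "i + 1 < ?n"
        using upper[of "ys ! i"] le_sorted_nth_iff_count_ge[OF ys, of i "ys ! i"]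
          le_sorted_nth_iff_count_ge[OF xs that, of "ys ! i"] i 2 by simp
    qed
    then show ?thesis
      using 2 by (simp add: interlacing_lists_def)
  qed
qed

lemma card_le_card_Diff1_Suc: "finite A \<Longrightarrow> card A \<le> Suc (card (A - {x}))"
  by (cases "x \<in> A") (simp_all add: card_Suc_Diff1)

lemma interlacing_if_interlacing_lists:
  assumes "interlacing_lists xs ys"
  shows "interlacing (mset xs) (mset ys)"
  unfolding interlacing_def count_ge_mset
proof
  fix t
  let ?n = "length xs"
  define S where "S = {k. k < length xs \<and> t \<le> xs ! k}"
  define T where "T = {k. k < length ys \<and> t \<le> ys ! k}"
  have fin: "finite S" "finite T"
    by (simp_all add: S_def T_def)
  have "card S \<le> card T \<and> card T \<le> card S + 1"
    using assms unfolding interlacing_lists_def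
  proof (elim disjE conjE)
    assume len: "length ys = ?n + 1"
      and nth: "\<forall>i<?n. ys ! i \<le> xs ! i \<and> xs ! i \<le> ys ! (i + 1)"
    have "card (Suc ` S) \<le> card T"
      using fin nth len by (intro card_mono) (auto simp: S_def T_def intro: order_trans)
    moreover have "card (T - {?n}) \<le> card S"
      using fin nth len by (intro card_mono) (auto simp: S_def T_def intro: order_trans)
    ultimately show ?thesis
      using card_le_card_Diff1_Suc[OF fin(2), of ?n] by (simp add: card_image)
  next
    assume len: "?n = length ys"
      and nth: "\<forall>i<?n. xs ! i \<le> ys ! i \<and> (i + 1 < ?n \<longrightarrow> ys ! i \<le> xs ! (i + 1))"
    have "card S \<le> card T"
      using fin nth len by (intro card_mono) (auto simp: S_def T_def intro: order_trans)
    moreover have "card (Suc ` (T - {?n - 1})) \<le> card S"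
      using fin nth len by (intro card_mono) (auto simp: S_def T_def intro: order_trans)
    ultimately show ?thesis
      using card_le_card_Diff1_Suc[OF fin(2), of "?n - 1"] by (simp add: card_image)
  qed
  then show "card S \<le> card T \<and> card T \<le> card S + 1"
    by simp
qed

section \<open>Positive combinations of interlacing polynomials\<close>

text \<open>
  Zeros listed decreasingly, \<open>ys ! 0 > xs ! 0 > ys ! 1 > xs ! 1 > \<dots>\<close>: in this order both
  degree cases of \<open>\<prec>\<close> are indexed alike.
\<close>

locale strictly_interlacing =
  fixes xs ys :: "real list"
  assumes xs_desc: "sorted (rev xs)" and ys_desc: "sorted (rev ys)"
    and length_ys: "length ys = length xs \<or> length ys = length xs + 1"
    and xs_less_ys: "k < length xs \<Longrightarrow> xs ! k < ys ! k"
    and ys_Suc_less_xs: "k + 1 < length ys \<Longrightarrow> ys ! (k + 1) < xs ! k"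
begin

abbreviation combination :: "real \<Rightarrow> real \<Rightarrow> real poly" where
  "combination a b \<equiv> smult a (root_poly (mset xs)) + smult b (root_poly (mset ys))"

lemma xs_antimono: "j \<le> k \<Longrightarrow> k < length xs \<Longrightarrow> xs ! k \<le> xs ! j"
  by (rule sorted_rev_nth_mono[OF xs_desc])

lemma ys_antimono: "j \<le> k \<Longrightarrow> k < length ys \<Longrightarrow> ys ! k \<le> ys ! j"
  by (rule sorted_rev_nth_mono[OF ys_desc])

lemma ys_greater_xs_iff:
  assumes "k < length xs" "j < length ys"
  shows "xs ! k < ys ! j \<longleftrightarrow> j \<le> k"
proof
  assume "xs ! k < ys ! j"
  show "j \<le> k"
  proof (rule ccontr)
    assume "\<not> j \<le> k"
    then have "ys ! j \<le> ys ! (k + 1)"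
      using assms(2) by (intro ys_antimono) auto
    then show False
      using ys_Suc_less_xs[of k] \<open>xs ! k < ys ! j\<close> \<open>\<not> j \<le> k\<close> assms(2) by simp
  qed
next
  assume "j \<le> k"
  then show "xs ! k < ys ! j"
    using xs_less_ys[OF assms(1)] ys_antimono[of j k] assms length_ys by force
qed

lemma xs_greater_ys_iff:
  assumes "k < length ys" "j < length xs"
  shows "ys ! k < xs ! j \<longleftrightarrow> j < k"
proof
  assume "ys ! k < xs ! j"
  then show "j < k"
    using xs_less_ys[of k] xs_antimono[of k j] assms by (cases "k \<le> j") auto
next
  assume "j < k"
  then have "xs ! (k - 1) \<le> xs ! j"
    using assms length_ys by (intro xs_antimono) auto
  then show "ys ! k < xs ! j"
    using ys_Suc_less_xs[of "k - 1"] \<open>j < k\<close> assms(1) by simp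
qed

lemma count_ys_greater_xs:
  assumes "k < length xs"
  shows "size {#z \<in># mset ys. xs ! k < z#} = k + 1"
proof -
  have "{j. j < length ys \<and> xs ! k < ys ! j} = {..k}"
    using assms length_ys ys_greater_xs_iff[OF assms] by auto
  then show ?thesis
    by (simp add: size_filter_mset_mset)
qed

lemma count_xs_greater_ys:
  assumes "k < length ys"
  shows "size {#z \<in># mset xs. ys ! k < z#} = k"
proof -
  have "{j. j < length xs \<and> ys ! k < xs ! j} = {..<k}"
    using assms length_ys xs_greater_ys_iff[OF assms] by auto
  then show ?thesis
    by (simp add: size_filter_mset_mset)
qed

lemma xs_notin_ys:
  assumes "k < length xs"
  shows "xs ! k \<notin># mset ys"
proof
  assume "xs ! k \<in># mset ys"
  then obtain j where "j < length ys" "ys ! j = xs ! k"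
    by (auto simp: in_set_conv_nth)
  then show False
    using ys_greater_xs_iff[OF assms, of j] xs_greater_ys_iff[of j k] assms by auto
qed

lemma ys_notin_xs:
  assumes "k < length ys"
  shows "ys ! k \<notin># mset xs"
proof
  assume "ys ! k \<in># mset xs"
  then obtain j where "j < length xs" "xs ! j = ys ! k"
    by (auto simp: in_set_conv_nth)
  then show False
    using ys_greater_xs_iff[of j k] xs_greater_ys_iff[OF assms, of j] assms by auto
qed

lemma sign_combination_at_xs:
  assumes "b > 0" "k < length xs"
  shows "(-1) ^ (k + 1) * poly (combination a b) (xs ! k) > 0"
proof -
  have "(-1) ^ (k + 1) * poly (combination a b) (xs ! k)
      = b * ((-1) ^ size {#z \<in># mset ys. xs ! k < z#} * poly (root_poly (mset ys)) (xs ! k))"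
    using assms(2) by (simp add: count_ys_greater_xs)
  then show ?thesis
    using sign_poly_root_poly[OF xs_notin_ys] assms by simp
qed

lemma sign_combination_at_ys:
  assumes "a > 0" "k < length ys"
  shows "(-1) ^ k * poly (combination a b) (ys ! k) > 0"
proof -
  have "(-1) ^ k * poly (combination a b) (ys ! k)
      = a * ((-1) ^ size {#z \<in># mset xs. ys ! k < z#} * poly (root_poly (mset xs)) (ys ! k))"
    using assms(2) by (simp add: count_xs_greater_ys)
  then show ?thesis
    using sign_poly_root_poly[OF ys_notin_xs] assms by simp
qed

lemma combination_root_between:
  assumes "a > 0" "b > 0" "k < length xs"
  obtains t where "xs ! k < t" "t < ys ! k" "poly (combination a b) t = 0"
proof -
  have "k < length ys"
    using assms(3) length_ys by auto
  have "0 < ((-1) ^ (k + 1) * poly (combination a b) (xs ! k)) *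
      ((-1) ^ k * poly (combination a b) (ys ! k))"
    using sign_combination_at_xs[OF assms(2,3)] sign_combination_at_ys[OF assms(1) \<open>k < length ys\<close>]
    by (rule mult_pos_pos)
  also have "\<dots> = ((-1) ^ (k + 1) * (-1) ^ k) *
      (poly (combination a b) (xs ! k) * poly (combination a b) (ys ! k))"
    by (simp only: mult_ac)
  also have "\<dots> = - (poly (combination a b) (xs ! k) * poly (combination a b) (ys ! k))"
    by (simp only: power_add[symmetric] minus_one_power_iff) simp
  finally show ?thesis
    using poly_IVT[OF xs_less_ys[OF assms(3)], of "combination a b"] that by auto
qed

lemma combination_roots:
  assumes "a > 0" "b > 0"
  obtains fs where "length fs = length xs"
    "\<And>k. k < length xs \<Longrightarrow> xs ! k < fs ! k \<and> fs ! k < ys ! k"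
    "root_poly (mset fs) dvd combination a b"
proof -
  have "\<exists>t. xs ! k < t \<and> t < ys ! k \<and> poly (combination a b) t = 0" if "k < length xs" for k
    using combination_root_between[OF assms that] by blast
  then obtain f where
    f: "\<And>k. k < length xs \<Longrightarrow> xs ! k < f k \<and> f k < ys ! k \<and> poly (combination a b) (f k) = 0"
    by metis
  have "f k < f j" if "j < k" "k < length xs" for j k
  proof -
    have "f k < ys ! k"
      using f that by auto
    also have "\<dots> \<le> ys ! (j + 1)"
      using that length_ys by (intro ys_antimono) auto
    also have "\<dots> < xs ! j"
      using ys_Suc_less_xs[of j] that length_ys by auto
    also have "\<dots> < f j"
      using f that by auto
    finally show ?thesis .
  qed
  then have "inj_on f {..<length xs}"
    by (intro linorder_inj_onI') (metis lessThan_iff order_less_irrefl)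
  then have "root_poly (mset (map f [0..<length xs])) dvd combination a b"
    using f by (intro root_poly_dvd) (auto simp: distinct_map atLeast0LessThan)
  then show ?thesis
    using that[of "map f [0..<length xs]"] f by simp
qed

lemma combination_cofactor:
  assumes a: "a > 0" and b: "b > 0"
    and factored: "combination a b = root_poly (mset fs) * q" and fs_len: "length fs = length xs"
  shows "degree q = length ys - length xs" "lead_coeff q > 0"
proof -
  have "lead_coeff (smult a (root_poly (mset xs))) > 0"
    "lead_coeff (smult b (root_poly (mset ys))) > 0"
    using a b by simp_all
  moreover have "degree (smult a (root_poly (mset xs))) \<le> degree (smult b (root_poly (mset ys)))"
    using a b length_ys by (auto simp: degree_root_poly)
  ultimately have sum_props: "degree (combination a b) = degree (smult b (root_poly (mset ys)))"
    "lead_coeff (combination a b) > 0"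
    by (rule degree_add_of_lead_coeff_pos)+
  have "q \<noteq> 0"
    using sum_props(2) factored by auto
  then show "degree q = length ys - length xs"
    using sum_props(1) b factored fs_len by (simp add: degree_mult_eq degree_root_poly)
  show "lead_coeff q > 0"
    using sum_props(2) by (simp only: factored lead_coeff_mult lead_coeff_root_poly mult_1)
qed

text \<open>
  When \<open>ys\<close> is one longer than \<open>xs\<close>, the cofactor \<open>q\<close> is linear; its sign at the last
  (least) element of \<open>ys\<close> puts its zero below all of \<open>ys\<close>.
\<close>

lemma combination_cofactor_pos:
  assumes "a > 0" "length ys = length xs + 1"
    and "length fs = length xs" "\<And>k. k < length xs \<Longrightarrow> xs ! k < fs ! k"
    and "combination a b = root_poly (mset fs) * q"
  shows "poly q (ys ! length xs) > 0"
proof -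
  let ?n = "length xs" and ?y = "ys ! length xs"
  have "?y < fs ! k" if "k < ?n" for k
    using xs_greater_ys_iff[of ?n k] assms(2) that assms(4)[OF that] by auto
  then have "{j. j < length fs \<and> ?y < fs ! j} = {..<?n}" "?y \<notin># mset fs"
    using assms(3) by (auto simp: in_set_conv_nth) (metis less_irrefl)
  then have "size {#z \<in># mset fs. ?y < z#} = ?n" "?y \<notin># mset fs"
    by (simp_all add: size_filter_mset_mset)
  then have "0 < (-1) ^ ?n * poly (root_poly (mset fs)) ?y"
    using sign_poly_root_poly[of ?y "mset fs"] assms(3) by simp
  moreover have "0 < (-1) ^ ?n * poly (root_poly (mset fs) * q) ?y"
    using sign_combination_at_ys[OF assms(1), where b = b and k = ?n] assms(2)
    unfolding assms(5) by simp
  then have "0 < (-1) ^ ?n * poly (root_poly (mset fs)) ?y * poly q ?y"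
    by (simp add: mult.assoc)
  ultimately show ?thesis
    by (metis zero_less_mult_pos)
qed

lemma combination_splits:
  assumes a: "a > 0" and b: "b > 0"
  obtains Z where "standard_with_zeros (combination a b) Z"
    "\<And>t. count_ge (mset xs) t \<le> count_ge Z t" "\<And>t. count_ge Z t \<le> count_ge (mset ys) t"
proof -
  obtain fs where fs_len: "length fs = length xs"
    and fs_between: "\<And>k. k < length xs \<Longrightarrow> xs ! k < fs ! k \<and> fs ! k < ys ! k"
    and "root_poly (mset fs) dvd combination a b"
    using combination_roots[OF a b] by blast
  then obtain q where factored: "combination a b = root_poly (mset fs) * q"
    by (elim dvdE)
  have deg_q: "degree q = length ys - length xs"
    using combination_cofactor[OF a b factored fs_len] by simp
  then obtain E where E: "standard_with_zeros q E"
    using standard_with_zeros_degree_le_1[of q] combination_cofactor[OF a b factored fs_len] length_ys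
    by force
  have "standard_with_zeros (combination a b) (mset fs + E)"
    using E factored by (auto simp: standard_with_zeros_def mult.commute)
  moreover have "count_ge (mset xs) t \<le> count_ge (mset fs + E) t" for t
    using count_ge_mset_mono_nth[of xs fs t] fs_len fs_between by fastforce
  moreover have "count_ge (mset fs + E) t \<le> count_ge (mset ys) t" for t
  proof (cases "E = {#}")
    case True
    then show ?thesis
      using count_ge_mset_mono_nth[of fs ys t] fs_len fs_between length_ys by fastforce
  next
    case False
    have "size E = length ys - length xs"
      using E deg_q standard_with_zerosD(4) by metis
    then have len: "length ys = length xs + 1"
      using False length_ys by auto
    then obtain e where e: "E = {#e#}"
      using \<open>size E = length ys - length xs\<close> size_1_singleton_mset by auto
    obtain c where "c > 0" "q = smult c [:-e, 1:]"
      using E e by (auto simp: standard_with_zeros_def root_poly_add_mset)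
    moreover have "poly q (ys ! length xs) > 0"
      using combination_cofactor_pos[OF a len fs_len _ factored] fs_between by blast
    ultimately have "e < ys ! length xs"
      by (simp add: zero_less_mult_iff)
    then have "count_ge (mset (fs @ [e])) t \<le> count_ge (mset ys) t"
      using fs_len fs_between len
      by (intro count_ge_mset_mono_nth) (auto simp: nth_append less_Suc_eq intro: less_imp_le)
    then show ?thesis
      using e by (simp add: add.commute)
  qed
  ultimately show ?thesis
    using that by blast
qed

end

lemma strictly_interlacing_if_disjoint:
  assumes il: "interlacing (mset xs) (mset ys)" and xs: "sorted (rev xs)" and ys: "sorted (rev ys)"
    and disj: "set xs \<inter> set ys = {}"
  shows "strictly_interlacing xs ys"
proof
  have lower: "count_ge (mset xs) t \<le> count_ge (mset ys) t"
    and upper: "count_ge (mset ys) t \<le> count_ge (mset xs) t + 1" for t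
    using il unfolding interlacing_def by auto
  show len: "length ys = length xs \<or> length ys = length xs + 1"
    using interlacing_size[OF il] by auto
  show "xs ! k < ys ! k" if k: "k < length xs" for k
  proof -
    have "xs ! k \<le> ys ! k"
      using lower[of "xs ! k"] le_sorted_rev_nth_iff_count_ge[OF xs k, of "xs ! k"]
        le_sorted_rev_nth_iff_count_ge[OF ys, of k "xs ! k"] k len by auto
    moreover have "xs ! k \<in> set xs" "ys ! k \<in> set ys"
      using k len by (auto intro!: nth_mem)
    ultimately show ?thesis
      using disj by (auto simp: order_less_le)
  qed
  show "ys ! (k + 1) < xs ! k" if k: "k + 1 < length ys" for k
  proof -
    have "ys ! (k + 1) \<le> xs ! k"
      using upper[of "ys ! (k + 1)"] le_sorted_rev_nth_iff_count_ge[OF ys k, of "ys ! (k + 1)"]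
        le_sorted_rev_nth_iff_count_ge[OF xs, of k "ys ! (k + 1)"] k len by auto
    moreover have "ys ! (k + 1) \<in> set ys" "xs ! k \<in> set xs"
      using k len by (auto intro!: nth_mem)
    ultimately show ?thesis
      using disj by (auto simp: order_less_le)
  qed
qed (use xs ys in simp_all)

lemma interlacing_combination_splits:
  assumes "interlacing X Y" "a > 0" "b > 0"
  obtains Z where "standard_with_zeros (smult a (root_poly X) + smult b (root_poly Y)) Z"
    "\<And>t. count_ge X t \<le> count_ge Z t" "\<And>t. count_ge Z t \<le> count_ge Y t"
proof -
  define G where "G = X \<inter># Y"
  define xs where "xs = rev (sorted_list_of_multiset (X - G))"
  define ys where "ys = rev (sorted_list_of_multiset (Y - G))"
  have X: "X = G + mset xs" and Y: "Y = G + mset ys"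
    unfolding G_def xs_def ys_def
    by (simp_all add: subset_mset.add_diff_inverse del: diff_intersect_left_idem
        diff_intersect_right_idem)
  have "interlacing (mset xs) (mset ys)"
    using assms(1) by (simp add: X Y interlacing_add_common)
  moreover have "set xs \<inter> set ys = {}"
    by (auto simp: xs_def ys_def G_def in_diff_count)
  ultimately interpret strictly_interlacing xs ys
    by (intro strictly_interlacing_if_disjoint) (simp_all add: xs_def ys_def)
  obtain Z where Z: "standard_with_zeros (combination a b) Z"
    "\<And>t. count_ge (mset xs) t \<le> count_ge Z t" "\<And>t. count_ge Z t \<le> count_ge (mset ys) t"
    using combination_splits[OF assms(2,3)] by blast
  have "smult a (root_poly X) + smult b (root_poly Y)
      = root_poly G * combination a b"
    by (simp add: X Y algebra_simps)
  then have "standard_with_zeros (smult a (root_poly X) + smult b (root_poly Y)) (G + Z)"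
    using Z(1) by (auto simp: standard_with_zeros_def)
  then show ?thesis
    using that Z(2,3) by (simp add: X Y)
qed

lemma standard_with_zeros_combination:
  assumes P: "standard_with_zeros P X" and Q: "standard_with_zeros Q Y" and "interlacing X Y"
    and "l > 0" "r > 0"
  obtains Z where "standard_with_zeros (smult l P + smult r Q) Z"
    "\<And>t. count_ge X t \<le> count_ge Z t" "\<And>t. count_ge Z t \<le> count_ge Y t"
proof -
  obtain a b where "a > 0" "P = smult a (root_poly X)" "b > 0" "Q = smult b (root_poly Y)"
    using P Q unfolding standard_with_zeros_def by blast
  moreover obtain Z
    where "standard_with_zeros (smult (l * a) (root_poly X) + smult (r * b) (root_poly Y)) Z"
      "\<And>t. count_ge X t \<le> count_ge Z t" "\<And>t. count_ge Z t \<le> count_ge Y t"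
    using interlacing_combination_splits[OF assms(3), of "l * a" "r * b"] assms(4,5) calculation
    by auto
  ultimately show ?thesis
    using that by simp
qed

section \<open>Interpolatory 1-cubes\<close>

lemma interp_1cube_zero_left: "interp_1cube 0 Q \<longleftrightarrow> standard Q \<and> only_nonpos_zeros Q"
  by (simp add: interp_1cube_def interlaces_def standard_def only_nonpos_zeros_def)

lemma interp_1cube_zero_right: "interp_1cube P 0 \<longleftrightarrow> standard P \<and> only_nonpos_zeros P"
  by (simp add: interp_1cube_def interlaces_def standard_def only_nonpos_zeros_def)

lemma interp_1cubeE:
  assumes "interp_1cube A B" "A \<noteq> 0" "B \<noteq> 0"
  obtains X Y where "standard_with_zeros A X" "standard_with_zeros B Y" "interlacing X Y"
    "\<forall>z\<in>#X. z \<le> 0" "\<forall>z\<in>#Y. z \<le> 0"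
proof -
  obtain xs ys where zeros: "zero_list A xs" "zero_list B ys"
    and nth: "(degree B = degree A + 1 \<and>
            (\<forall>i<length xs. ys ! i \<le> xs ! i \<and> xs ! i \<le> ys ! (i + 1))) \<or>
         (degree A = degree B \<and>
            (\<forall>i<length xs. xs ! i \<le> ys ! i \<and> (i + 1 < length xs \<longrightarrow> ys ! i \<le> xs ! (i + 1))))"
    using assms unfolding interp_1cube_def interlaces_def by blast
  have A: "standard_with_zeros A (mset xs)" and B: "standard_with_zeros B (mset ys)"
    using zeros assms unfolding interp_1cube_def standard_def
    by (auto simp: zero_list_def standard_with_zeros_def prod_list_linear_factors)
  have "interlacing_lists xs ys"
    using nth standard_with_zerosD(4)[OF A] standard_with_zerosD(4)[OF B]
    by (auto simp: interlacing_lists_def)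
  then have "interlacing (mset xs) (mset ys)"
    by (rule interlacing_if_interlacing_lists)
  moreover have "\<forall>z\<in>#mset xs. z \<le> 0" "\<forall>z\<in>#mset ys. z \<le> 0"
    using assms(1) standard_with_zerosD(6)[OF A] standard_with_zerosD(6)[OF B]
    by (simp_all add: interp_1cube_def)
  ultimately show ?thesis
    using that A B by blast
qed

lemma interp_1cubeI:
  assumes P: "standard_with_zeros P X" and Q: "standard_with_zeros Q Y" and "interlacing X Y"
    and "\<forall>z\<in>#X. z \<le> 0" "\<forall>z\<in>#Y. z \<le> 0"
  shows "interp_1cube P Q"
proof -
  define xs where "xs = sorted_list_of_multiset X"
  define ys where "ys = sorted_list_of_multiset Y"
  have X: "X = mset xs" and Y: "Y = mset ys"
    by (simp_all add: xs_def ys_def)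
  have "zero_list P xs" "zero_list Q ys"
    using standard_with_zerosD(1,5)[OF P] standard_with_zerosD(1,5)[OF Q]
    by (simp_all add: zero_list_def prod_list_linear_factors xs_def ys_def)
  moreover have "interlacing_lists xs ys"
    using assms(3) by (intro interlacing_lists_if_interlacing) (simp_all add: xs_def ys_def)
  ultimately have "interlaces P Q"
    using standard_with_zerosD(3,4)[OF P] standard_with_zerosD(3,4)[OF Q]
    unfolding interlaces_def interlacing_lists_def X Y by auto
  then show ?thesis
    using standard_with_zerosD(2,6)[OF P] standard_with_zerosD(2,6)[OF Q] assms(4,5)
    by (simp add: interp_1cube_def)
qed

lemma interp_1cube_shift:
  assumes "interp_1cube P Q"
  shows "interp_1cube Q ([:0, 1:] * P)"
proof -
  consider "P = 0" | "P \<noteq> 0" "Q = 0" | "P \<noteq> 0" "Q \<noteq> 0"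
    by blast
  then show ?thesis
  proof cases
    case 1
    then show ?thesis
      using assms by (simp add: interp_1cube_zero_left interp_1cube_zero_right)
  next
    case 2
    then obtain X where "standard_with_zeros P X" "\<forall>z\<in>#X. z \<le> 0"
      using assms standard_with_zerosE unfolding interp_1cube_def by metis
    then show ?thesis
      using standard_with_zerosD(2,6)[OF standard_with_zeros_times_x] 2
      by (simp add: interp_1cube_zero_left)
  next
    case 3
    then obtain X Y where X: "standard_with_zeros P X" "\<forall>z\<in>#X. z \<le> 0"
      and Y: "standard_with_zeros Q Y" "\<forall>z\<in>#Y. z \<le> 0" and "interlacing X Y"
      using interp_1cubeE[OF assms] by metis
    then have "interlacing Y (add_mset 0 X)"
      by (intro interlacing_add_mset_0)
    then show ?thesis
      using interp_1cubeI[OF Y(1) standard_with_zeros_times_x[OF X(1)]] X(2) Y(2) by simp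
  qed
qed

lemma interp_1cube_combination_of_zeros:
  assumes P: "standard_with_zeros P X" "\<forall>z\<in>#X. z \<le> 0"
    and Q: "standard_with_zeros Q Y" "\<forall>z\<in>#Y. z \<le> 0"
    and XY: "interlacing X Y" and "l > 0" "r > 0"
  shows "interp_1cube (smult l P + smult r Q) (smult l Q + smult r ([:0, 1:] * P))"
proof -
  obtain Z where Z: "standard_with_zeros (smult l P + smult r Q) Z"
    and XZ: "\<And>t. count_ge X t \<le> count_ge Z t" and ZY: "\<And>t. count_ge Z t \<le> count_ge Y t"
    using standard_with_zeros_combination[OF P(1) Q(1) XY assms(6,7)] by blast
  obtain W where W: "standard_with_zeros (smult l Q + smult r ([:0, 1:] * P)) W"
    and YW: "\<And>t. count_ge Y t \<le> count_ge W t" and WX: "\<And>t. count_ge W t \<le> count_ge (add_mset 0 X) t"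
    using standard_with_zeros_combination[OF Q(1) standard_with_zeros_times_x[OF P(1)]
        interlacing_add_mset_0[OF XY Q(2)] assms(6,7)] by blast
  have "interlacing Z W"
    unfolding interlacing_def
  proof
    fix t
    have "count_ge W t \<le> count_ge X t + 1"
      using WX[of t] by (simp add: count_ge_add_mset split: if_splits)
    then show "count_ge Z t \<le> count_ge W t \<and> count_ge W t \<le> count_ge Z t + 1"
      using XZ[of t] ZY[of t] YW[of t] by linarith
  qed
  moreover have "\<forall>z\<in>#Z. z \<le> 0"
    using ZY Q(2) by (rule nonpos_if_count_ge_le)
  moreover have "\<forall>z\<in>#W. z \<le> 0"
    using WX P(2) by (intro nonpos_if_count_ge_le[of W "add_mset 0 X"]) auto
  ultimately show ?thesis
    using Z W by (rule interp_1cubeI[rotated 2])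
qed

lemma interp_1cube_combination:
  assumes "interp_1cube P Q" "l > 0" "r > 0"
  shows "interp_1cube (smult l P + smult r Q) (smult l Q + smult r ([:0, 1:] * P))"
proof -
  consider "P = 0" "Q = 0" | "P = 0" "Q \<noteq> 0" | "P \<noteq> 0" "Q = 0" | "P \<noteq> 0" "Q \<noteq> 0"
    by blast
  then show ?thesis
  proof cases
    case 1
    then show ?thesis
      by (simp add: interp_1cube_zero_left standard_def only_nonpos_zeros_def)
  next
    case 2
    then obtain Y where "standard_with_zeros Q Y" "\<forall>z\<in>#Y. z \<le> 0"
      using assms(1) standard_with_zerosE unfolding interp_1cube_def by metis
    then show ?thesis
      using interp_1cubeI[OF standard_with_zeros_smult standard_with_zeros_smult interlacing_refl]
        assms(2,3) 2 by simp
  next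
    case 3
    then obtain X where X: "standard_with_zeros P X" "\<forall>z\<in>#X. z \<le> 0"
      using assms(1) standard_with_zerosE unfolding interp_1cube_def by metis
    then have "interlacing X (add_mset 0 X)"
      using interlacing_add_mset_0[OF interlacing_refl] by blast
    then show ?thesis
      using interp_1cubeI[OF standard_with_zeros_smult[OF X(1)]
          standard_with_zeros_smult[OF standard_with_zeros_times_x[OF X(1)]]] X(2) assms(2,3) 3
      by simp
  next
    case 4
    then obtain X Y where "standard_with_zeros P X" "\<forall>z\<in>#X. z \<le> 0"
      "standard_with_zeros Q Y" "\<forall>z\<in>#Y. z \<le> 0" "interlacing X Y"
      using interp_1cubeE[OF assms(1)] by metis
    then show ?thesis
      using interp_1cube_combination_of_zeros assms(2,3) by blast
  qed
qed

theorem lemma4p4: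
  fixes A B :: "real poly"
  assumes "interp_1cube A B"
  shows "interp_square A B B ([:0, 1:] * A)"
  using interp_1cube_combination[OF assms] interp_1cube_combination[OF interp_1cube_shift[OF assms]]
  by (simp add: interp_square_def)

end
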